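(* Let $n\ge2$, $c\in(0,\infty)$, and let $\Sigma_n\in\mathbb{R}^{n\times n}$ have entries $(\Sigma_n)_{ij}=\frac{\pi}{i+j}+\frac{4c\pi^2}{(i+1)(j+1)}$ if $c\in(0,1]$ and $(\Sigma_n)_{ij}=\frac{\pi}{c(i+j)}+\frac{4\pi^2}{(i+1)(j+1)}$ if $c\in(1,\infty)$. Then $\Sigma_n=GG^t$ with $G=(g_{ij})$ lower triangular ($g_{ij}=0$ for $j>i$) where, for $c\in(0,1]$, $$g_{i1}=\frac{2}{i+1}\sqrt{\frac{\pi(1+2c\pi)}{2}}\ (i\ge1),\qquad g_{ij}=\frac{\prod_{k=1}^{j-1}(i-k)\prod_{k=1}^{j}(j+k)}{\prod_{k=1}^{j-1}(j-k)\prod_{k=1}^{j}(i+k)}\sqrt{\frac{\pi\prod_{k=1}^{j-1}(j-k)^2}{2j\prod_{k=1}^{j-1}(j+k)^2}}\ (1<j\le i),$$ and for $c\in(1,\infty)$ the same formulas hold with the radicands replaced by $\frac{\pi(1+2c\pi)}{2c}$ and $\frac{\pi\prod_{k=1}^{j-1}(j-k)^2}{2cj\prod_{k=1}^{j-1}(j+k)^2}$, respectively.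
   Context: $\Sigma_n$ is the asymptotic covariance matrix, in the critical regime $t\delta_t^d\to c$, of the vector $(\tilde L_t^{(0)},\dots,\tilde L_t^{(n-1)})$ of normalized length power functionals in dimension $d=2$ for a window of volume $1$. *)

theory Defs
  imports "HOL-Analysis.Analysis" "Jordan_Normal_Form.Matrix"
begin

text \<open>Entries use the paper's 1-based indices i, j.\<close>

definition Sigma_entry :: "real \<Rightarrow> nat \<Rightarrow> nat \<Rightarrow> real" where
  "Sigma_entry c i j =
     (if c \<le> 1 then pi / (real i + real j) + 4 * c * pi^2 / ((real i + 1) * (real j + 1))
      else pi / (c * (real i + real j)) + 4 * pi^2 / ((real i + 1) * (real j + 1)))"

definition radicand1 :: "real \<Rightarrow> real" where
  "radicand1 c = (if c \<le> 1 then pi * (1 + 2 * c * pi) / 2 else pi * (1 + 2 * c * pi) / (2 * c))"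

definition radicand2 :: "real \<Rightarrow> nat \<Rightarrow> real" where
  "radicand2 c j =
     (if c \<le> 1
      then pi * (\<Prod>k=1..j-1. (real j - real k)^2) / (2 * real j * (\<Prod>k=1..j-1. (real j + real k)^2))
      else pi * (\<Prod>k=1..j-1. (real j - real k)^2) / (2 * c * real j * (\<Prod>k=1..j-1. (real j + real k)^2)))"

definition G_entry :: "real \<Rightarrow> nat \<Rightarrow> nat \<Rightarrow> real" where
  "G_entry c i j =
     (if j > i then 0
      else if j = 1 then 2 / (real i + 1) * sqrt (radicand1 c)
      else ((\<Prod>k=1..j-1. (real i - real k)) * (\<Prod>k=1..j. (real j + real k)))
           / ((\<Prod>k=1..j-1. (real j - real k)) * (\<Prod>k=1..j. (real i + real k)))
           * sqrt (radicand2 c j))"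

definition Sigma_mat :: "nat \<Rightarrow> real \<Rightarrow> real mat" where
  "Sigma_mat n c = mat n n (\<lambda>(i, j). Sigma_entry c (i + 1) (j + 1))"

definition G_mat :: "nat \<Rightarrow> real \<Rightarrow> real mat" where
  "G_mat n c = mat n n (\<lambda>(i, j). G_entry c (i + 1) (j + 1))"

end

theory Submission
  imports Defs
begin

(*
  Put f k x = (prod of x - m for 1 <= m < k) / (prod of x + m for 1 <= m <= k). Telescoping
  in N gives 1/(x+y) - (sum of 2k f k x f k y for k <= N) =
  (prod of (x-m)(y-m)/((x+m)(y+m)) for m <= N) / (x+y), which vanishes when x is a positive
  integer at most N. So the Cauchy matrix 1/(i+j) equals F D F^T with F i k = f k i lower
  triangular and D = diag(2k). Up to the factor 1 / max 1 c, Sigma_n is pi times this matrix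
  plus the rank-one term 4 c pi^2 f 1 i f 1 j, which only changes the first entry of D; and G is
  F times the square root of the resulting diagonal matrix.
*)

definition cauchy_factor :: "real \<Rightarrow> nat \<Rightarrow> real" where
  "cauchy_factor x k = (\<Prod>m=1..k-1. x - real m) / (\<Prod>m=1..k. x + real m)"

lemma cauchy_factor_Suc_product:
  "cauchy_factor x (Suc N) * cauchy_factor y (Suc N)
     = (\<Prod>m=1..N. (x - real m) * (y - real m) / ((x + real m) * (y + real m)))
       / ((x + real (Suc N)) * (y + real (Suc N)))"
  by (simp add: cauchy_factor_def prod.distrib prod_dividef)

lemma cauchy_kernel_remainder:
  fixes x y :: real
  assumes "x > 0" "y > 0"
  shows "1 / (x + y) - (\<Sum>k=1..N. 2 * real k * cauchy_factor x k * cauchy_factor y k)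
     = (\<Prod>m=1..N. (x - real m) * (y - real m) / ((x + real m) * (y + real m))) / (x + y)"
proof (induction N)
  case (Suc N)
  define r where "r = real (Suc N)"
  define p where "p = (\<Prod>m=1..N. (x - real m) * (y - real m) / ((x + real m) * (y + real m)))"
  have "x + y \<noteq> 0" "x + r \<noteq> 0" "y + r \<noteq> 0" using assms by (auto simp: r_def)
  then have step: "1 / (x + y) - 2 * r / ((x + r) * (y + r))
      = (x - r) * (y - r) / ((x + r) * (y + r)) / (x + y)"
    by (simp add: divide_simps) (simp add: algebra_simps)
  have "(\<Sum>k=1..Suc N. 2 * real k * cauchy_factor x k * cauchy_factor y k)
      = (\<Sum>k=1..N. 2 * real k * cauchy_factor x k * cauchy_factor y k)
        + 2 * r * (p / ((x + r) * (y + r)))"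
    by (simp add: cauchy_factor_Suc_product p_def r_def mult.assoc)
  then have "1 / (x + y) - (\<Sum>k=1..Suc N. 2 * real k * cauchy_factor x k * cauchy_factor y k)
      = p / (x + y) - 2 * r * (p / ((x + r) * (y + r)))"
    using Suc.IH by (simp add: p_def)
  also have "\<dots> = p * (1 / (x + y) - 2 * r / ((x + r) * (y + r)))"
    by (simp add: algebra_simps)
  also have "\<dots> = p * ((x - r) * (y - r) / ((x + r) * (y + r))) / (x + y)"
    by (simp add: step)
  finally show ?case
    by (simp add: p_def r_def)
qed simp

lemma cauchy_factor_eq_0:
  assumes "1 \<le> i" "i < k"
  shows "cauchy_factor (real i) k = 0"
  using assms by (auto simp: cauchy_factor_def prod_zero_iff)

lemma cauchy_kernel_expansion:
  assumes "1 \<le> i" "i \<le> N" "1 \<le> j"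
  shows "1 / (real i + real j)
     = (\<Sum>k=1..N. 2 * real k * cauchy_factor (real i) k * cauchy_factor (real j) k)"
proof -
  have vanishing: "(\<Prod>m=1..N. (real i - real m) * (real j - real m)
      / ((real i + real m) * (real j + real m))) = 0"
    using assms by (intro prod_zero) (auto intro!: bexI[of _ i])
  show ?thesis
    using cauchy_kernel_remainder[of "real i" "real j" N] assms unfolding vanishing by simp
qed

(* Sigma_entry, radicand1 and radicand2 for c > 1 are their c <= 1 formulas multiplied by 1 / c. *)

definition regime_weight :: "real \<Rightarrow> real" where
  "regime_weight c = 1 / max 1 c"

lemma Sigma_entry_eq_regime_weight:
  "Sigma_entry c i j
     = regime_weight c * (pi / (real i + real j) + 4 * c * pi^2 / ((real i + 1) * (real j + 1)))"
proof (cases "c \<le> 1")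
  case False
  then have "pi / (c * (real i + real j)) = 1 / c * (pi / (real i + real j))"
    by simp
  with False show ?thesis
    by (simp add: Sigma_entry_def regime_weight_def algebra_simps)
qed (simp add: Sigma_entry_def regime_weight_def)

definition G_column_scale :: "real \<Rightarrow> nat \<Rightarrow> real" where
  "G_column_scale c k =
     (if k = 1 then 2 * sqrt (radicand1 c)
      else (\<Prod>m=1..k. real k + real m) / (\<Prod>m=1..k-1. real k - real m) * sqrt (radicand2 c k))"

lemma G_entry_eq_cauchy_factor:
  assumes "1 \<le> i" "1 \<le> k"
  shows "G_entry c i k = cauchy_factor (real i) k * G_column_scale c k"
proof (cases "k \<le> i")
  case True
  then show ?thesis
    by (auto simp: G_entry_def G_column_scale_def cauchy_factor_def)
next
  case False
  with assms show ?thesis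
    by (simp add: G_entry_def cauchy_factor_eq_0)
qed

lemma G_column_scale_square:
  assumes "c > 0" "1 \<le> k"
  shows "(G_column_scale c k)^2
     = regime_weight c * (2 * real k * pi + (if k = 1 then 4 * c * pi^2 else 0))"
proof (cases "k = 1")
  case True
  have "radicand1 c \<ge> 0"
    using assms by (simp add: radicand1_def)
  with True assms show ?thesis
    by (simp add: G_column_scale_def power_mult_distrib radicand1_def regime_weight_def max_def
        field_simps power2_eq_square)
next
  case False
  define A where "A = (\<Prod>m=1..k-1. real k - real m)"
  define B where "B = (\<Prod>m=1..k-1. real k + real m)"
  have "A \<noteq> 0"
    by (auto simp: A_def prod_zero_iff)
  have "B > 0"
    by (auto simp: B_def intro: prod_pos)
  have top: "(\<Prod>m=1..k. real k + real m) = 2 * real k * B"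
    using assms by (cases k) (simp_all add: B_def)
  have radicand: "radicand2 c k = regime_weight c * (pi * A^2 / (2 * real k * B^2))"
    using assms by (simp add: radicand2_def regime_weight_def A_def B_def max_def
        prod_power_distrib field_simps)
  have "radicand2 c k \<ge> 0"
    using assms by (simp add: radicand regime_weight_def)
  then have "(G_column_scale c k)^2 = (2 * real k * B / A)^2 * radicand2 c k"
    using False unfolding G_column_scale_def top A_def[symmetric]
    by (simp add: power_mult_distrib power_divide)
  also have "\<dots> = regime_weight c * (2 * real k * pi)"
    using \<open>A \<noteq> 0\<close> \<open>B > 0\<close> assms by (simp add: radicand field_simps power2_eq_square)
  finally show ?thesis
    using False by simp
qed

lemma sum_G_entry_products_eq_Sigma_entry:
  assumes "c > 0" "1 \<le> i" "i \<le> N" "1 \<le> j"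
  shows "(\<Sum>k=1..N. G_entry c i k * G_entry c j k) = Sigma_entry c i j"
proof -
  define f where "f x k = cauchy_factor (real x) k" for x k
  have "1 \<le> N"
    using assms by simp
  have "(\<Sum>k=1..N. G_entry c i k * G_entry c j k)
      = (\<Sum>k=1..N. f i k * f j k * (G_column_scale c k)^2)"
    using assms by (intro sum.cong) (simp_all add: G_entry_eq_cauchy_factor f_def power2_eq_square)
  also have "\<dots> = (\<Sum>k=1..N. regime_weight c * pi * (2 * real k * f i k * f j k)
      + (if k = 1 then regime_weight c * 4 * c * pi^2 * (f i 1 * f j 1) else 0))"
    using assms(1) by (intro sum.cong) (simp_all add: G_column_scale_square algebra_simps)
  also have "\<dots> = regime_weight c * (pi * (\<Sum>k=1..N. 2 * real k * f i k * f j k)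
      + 4 * c * pi^2 * (f i 1 * f j 1))"
    using \<open>1 \<le> N\<close> by (simp add: sum.distrib sum_distrib_left algebra_simps)
  also have "\<dots> = Sigma_entry c i j"
  proof -
    have "f x 1 = 1 / (real x + 1)" for x
      by (simp add: f_def cauchy_factor_def)
    then show ?thesis
      unfolding cauchy_kernel_expansion[OF assms(2-4), folded f_def, symmetric]
      by (simp add: Sigma_entry_eq_regime_weight)
  qed
  finally show ?thesis .
qed

theorem corollary7p13:
  fixes n :: nat and c :: real
  assumes "n \<ge> 2" and "c > 0"
  shows "Sigma_mat n c = G_mat n c * transpose_mat (G_mat n c)
         \<and> (\<forall>i<n. \<forall>j<n. j > i \<longrightarrow> G_mat n c $$ (i, j) = 0)"
proof
  show "Sigma_mat n c = G_mat n c * transpose_mat (G_mat n c)"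
  proof (rule eq_matI)
    fix i j
    assume "i < dim_row (G_mat n c * transpose_mat (G_mat n c))"
      and "j < dim_col (G_mat n c * transpose_mat (G_mat n c))"
    then have "i < n" "j < n"
      by (simp_all add: G_mat_def)
    then have "(G_mat n c * transpose_mat (G_mat n c)) $$ (i, j)
        = (\<Sum>k=1..n. G_entry c (Suc i) k * G_entry c (Suc j) k)"
      by (simp add: G_mat_def scalar_prod_def sum.atLeast1_atMost_eq lessThan_atLeast0)
    also have "\<dots> = Sigma_entry c (Suc i) (Suc j)"
      using \<open>i < n\<close> \<open>c > 0\<close> by (intro sum_G_entry_products_eq_Sigma_entry) auto
    finally show "Sigma_mat n c $$ (i, j) = (G_mat n c * transpose_mat (G_mat n c)) $$ (i, j)"
      using \<open>i < n\<close> \<open>j < n\<close> by (simp add: Sigma_mat_def)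
  qed (simp_all add: Sigma_mat_def G_mat_def)
  show "\<forall>i<n. \<forall>j<n. j > i \<longrightarrow> G_mat n c $$ (i, j) = 0"
    by (simp add: G_mat_def G_entry_def)
qed

end
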